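(* The function $\phi:(0,\infty)\to\mathbb{R}$, $\phi(x)=\frac{1}{\tanh^2(x)}-\frac{1}{x\tanh(x)}$, is increasing on $(0,\infty)$. *)

theory Defs
  imports "HOL-Analysis.Analysis"
begin

end

theory Submission
  imports Defs
begin

text \<open>
  Writing \<open>\<phi> x = coth x ^ 2 - coth x / x\<close>, one computes \<open>\<phi>' x = g x / (x ^ 2 * sinh x ^ 3)\<close> with
  \<open>g x = cosh x * sinh x ^ 2 + x * sinh x - 2 * x ^ 2 * cosh x\<close>. Because
  \<open>cosh x * sinh x ^ 2 = (cosh (3 * x) - cosh x) / 4\<close>, the Taylor coefficient of \<open>x ^ n / n!\<close>
  in \<open>g\<close> is \<open>(3 ^ n - 1) / 4 + 3 * n - 2 * n ^ 2\<close> for even \<open>n\<close> and \<open>0\<close> for odd \<open>n\<close>.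
  These coefficients are nonnegative (as \<open>3 ^ n \<ge> 8 * n ^ 2 - 12 * n + 1\<close> for \<open>n \<noteq> 3\<close>) and the
  one for \<open>n = 6\<close> is positive, so \<open>g > 0\<close> and hence \<open>\<phi>' > 0\<close> on \<open>(0, \<infinity>)\<close>.
\<close>

lemma strict_mono_on_if_DERIV_pos:
  fixes f :: "real \<Rightarrow> real"
  assumes "is_interval S"
    and "\<And>x. x \<in> S \<Longrightarrow> \<exists>y. DERIV f x :> y \<and> y > 0"
  shows "strict_mono_on S f"
proof (rule strict_mono_onI)
  fix a b assume "a \<in> S" "b \<in> S" "a < b"
  then have "x \<in> S" if "a \<le> x" "x \<le> b" for x
    using \<open>is_interval S\<close> that unfolding is_interval_1 by blast
  then show "f a < f b"
    using assms(2) by (intro DERIV_pos_imp_increasing[OF \<open>a < b\<close>]) blast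
qed

lemma sums_egf_mult_x:
  fixes c :: "nat \<Rightarrow> 'a :: {real_normed_field}"
  assumes "(\<lambda>n. c n * x ^ n / fact n) sums s"
  shows "(\<lambda>n. of_nat n * c (n - 1) * x ^ n / fact n) sums (x * s)"
proof -
  have "(\<lambda>n. of_nat (Suc n) * c n * x ^ Suc n / fact (Suc n)) = (\<lambda>n. x * (c n * x ^ n / fact n))"
    by (simp add: field_simps del: of_nat_Suc)
  then show ?thesis
    using sums_mult[OF assms, of x] sums_Suc_iff[of "\<lambda>n. of_nat n * c (n - 1) * x ^ n / fact n"]
    by simp
qed

lemma cosh_egf:
  fixes a x :: real
  shows "(\<lambda>n. (if even n then a ^ n else 0) * x ^ n / fact n) sums cosh (a * x)"
proof -
  have "(\<lambda>n. if even n then (a * x) ^ n /\<^sub>R fact n else 0) = (\<lambda>n. (if even n then a ^ n else 0) * x ^ n / fact n)"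
    by (simp add: fun_eq_iff power_mult_distrib field_simps)
  then show ?thesis using cosh_converges[of "a * x"] by simp
qed

lemma x_sinh_egf:
  fixes x :: real
  shows "(\<lambda>n. (if even n then real n else 0) * x ^ n / fact n) sums (x * sinh x)"
proof -
  have "(\<lambda>n. if even n then 0 else x ^ n /\<^sub>R fact n) = (\<lambda>n. (if even n then 0 else 1) * x ^ n / fact n)"
    by (simp add: fun_eq_iff field_simps)
  then have "(\<lambda>n. (if even n then 0 else 1) * x ^ n / fact n) sums sinh x"
    using sinh_converges[of x] by simp
  moreover have "real n * (if even (n - 1) then 0 else 1) = (if even n then real n else 0)" for n
    by (cases n) auto
  ultimately show ?thesis
    using sums_egf_mult_x by fastforce
qed

lemma x2_cosh_egf:
  fixes x :: real
  shows "(\<lambda>n. (if even n then real n * (real n - 1) else 0) * x ^ n / fact n) sums (x^2 * cosh x)"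
proof -
  have coeff: "real n * (real (n - 1) * (if even (n - 1 - 1) then 1 ^ (n - 1 - 1) else 0))
      = (if even n then real n * (real n - 1) else 0)" for n
    by (cases n; cases "n - 1") auto
  show ?thesis
    using sums_egf_mult_x[OF sums_egf_mult_x[OF cosh_egf[of 1 x]]]
    unfolding coeff by (simp add: power2_eq_square mult.assoc)
qed

lemma cosh_mult_sinh_square:
  fixes x :: "'a :: {banach, real_normed_field}"
  shows "cosh x * sinh x ^ 2 = (cosh (3 * x) - cosh x) / 4"
proof -
  have "cosh (3 * x) = cosh (2 * x + x)" by (simp add: algebra_simps)
  also have "\<dots> = cosh x + 4 * cosh x * sinh x ^ 2"
    unfolding cosh_add cosh_double sinh_double cosh_square_eq by (simp add: algebra_simps power2_eq_square)
  finally show ?thesis by (simp add: field_simps)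
qed

lemma hyperbolic_numerator_egf:
  fixes x :: real
  shows "(\<lambda>n. (if even n then (3 ^ n - 1) / 4 + 3 * real n - 2 * real n ^ 2 else 0) * x ^ n / fact n)
    sums (cosh x * sinh x ^ 2 + x * sinh x - 2 * x ^ 2 * cosh x)"
proof -
  let ?raw = "\<lambda>n. ((if even n then 3 ^ n else 0) * x ^ n / fact n - (if even n then 1 ^ n else 0) * x ^ n / fact n) / 4
      + (if even n then real n else 0) * x ^ n / fact n
      - 2 * ((if even n then real n * (real n - 1) else 0) * x ^ n / fact n)"
  have "?raw sums ((cosh (3 * x) - cosh (1 * x)) / 4 + x * sinh x - 2 * (x^2 * cosh x))"
    by (intro sums_add sums_diff sums_divide sums_mult cosh_egf x_sinh_egf x2_cosh_egf)
  moreover have "?raw = (\<lambda>n. (if even n then (3 ^ n - 1) / 4 + 3 * real n - 2 * real n ^ 2 else 0) * x ^ n / fact n)"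
    by (auto simp: fun_eq_iff field_simps power2_eq_square)
  ultimately show ?thesis
    by (simp add: cosh_mult_sinh_square mult.assoc)
qed

lemma three_power_ge_quadratic:
  "4 \<le> n \<Longrightarrow> 8 * real n ^ 2 - 12 * real n + 1 \<le> 3 ^ n"
proof (induction n rule: dec_induct)
  case (step n)
  have "4 * real n \<le> real n * real n"
    using step.hyps by (intro mult_right_mono) auto
  then have "8 * real (Suc n) ^ 2 - 12 * real (Suc n) + 1 \<le> 3 * (8 * real n ^ 2 - 12 * real n + 1)"
    by (simp add: power2_eq_square algebra_simps)
  also have "\<dots> \<le> 3 ^ Suc n"
    using step.IH by simp
  finally show ?case .
qed simp

lemma hyperbolic_numerator_coeff_nonneg:
  assumes "even n"
  shows "0 \<le> (3 ^ n - 1) / 4 + 3 * real n - 2 * real n ^ 2"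
proof -
  have "n = 0 \<or> n = 2 \<or> 4 \<le> n"
    using assms by presburger
  moreover have ?thesis if "4 \<le> n"
    using three_power_ge_quadratic[OF that] by (simp add: field_simps)
  ultimately show ?thesis
    by auto
qed

lemma hyperbolic_numerator_pos:
  fixes x :: real
  assumes "0 < x"
  shows "0 < cosh x * sinh x ^ 2 + x * sinh x - 2 * x ^ 2 * cosh x"
proof -
  let ?a = "\<lambda>n. (if even n then (3 ^ n - 1) / 4 + 3 * real n - 2 * real n ^ 2 else 0) * x ^ n / fact n"
  have "0 < suminf ?a"
  proof (rule suminf_pos2)
    show "summable ?a"
      using hyperbolic_numerator_egf by (rule sums_summable)
    show "0 \<le> ?a n" for n
      using assms hyperbolic_numerator_coeff_nonneg[of n] by simp
    show "0 < ?a 6"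
      using assms by simp
  qed
  then show ?thesis
    using sums_unique[OF hyperbolic_numerator_egf[of x]] by linarith
qed

lemma DERIV_coth_square_minus_coth_div:
  fixes x :: real
  assumes "0 < x"
  shows "((\<lambda>x. 1 / tanh x ^ 2 - 1 / (x * tanh x)) has_real_derivative
      (cosh x * sinh x ^ 2 + x * sinh x - 2 * x ^ 2 * cosh x) / (x ^ 2 * sinh x ^ 3)) (at x)"
proof -
  have "0 < sinh x"
    using assms by simp
  then have "((\<lambda>x. cosh x ^ 2 / sinh x ^ 2 - cosh x / (x * sinh x)) has_real_derivative
      (cosh x * sinh x ^ 2 + x * sinh x - 2 * x ^ 2 * cosh x) / (x ^ 2 * sinh x ^ 3)) (at x)"
    using assms
    by (auto intro!: derivative_eq_intros simp: field_simps power2_eq_square power3_eq_cube)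
      (use cosh_square_eq[of x] in algebra)
  then show ?thesis
    by (simp add: tanh_def power_divide)
qed

theorem lemma6p3:
  shows "strict_mono_on {0<..} (\<lambda>x::real. 1 / (tanh x)^2 - 1 / (x * tanh x))"
proof (rule strict_mono_on_if_DERIV_pos)
  show "is_interval {0::real<..}"
    by simp
  fix x :: real
  assume "x \<in> {0<..}"
  then have "0 < x" and "0 < sinh x"
    by simp_all
  then show "\<exists>y. DERIV (\<lambda>x. 1 / (tanh x)^2 - 1 / (x * tanh x)) x :> y \<and> y > 0"
    using DERIV_coth_square_minus_coth_div hyperbolic_numerator_pos
    by (meson divide_pos_pos mult_pos_pos zero_less_power)
qed

end
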